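(* Let $f\colon K\to R$ be a right t-unital homomorphism of (nonunital) rings. Then (a) a right $R$-module is t-unital as an $R$-module if and only if it is t-unital as a $K$-module; (b) a left $R$-module is c-unital as an $R$-module if and only if it is c-unital as a $K$-module.
   Context: Rings are associative, not necessarily unital; modules are not assumed unital; $R$-modules are regarded as $K$-modules via $f$. A right module $N$ over a ring $S$ is t-unital if $N\otimes_S S\to N$, $n\otimes s\mapsto ns$, is an isomorphism; a left $S$-module $P$ is c-unital if $P\to\mathrm{Hom}_S(S,P)$, $p\mapsto(s\mapsto sp)$, is an isomorphism. The homomorphism $f$ is right t-unital if $R$, as a right $K$-module via $f$, is t-unital. *)

theory Defs
  imports Main "HOL-Library.Poly_Mapping"
begin

text \<open>Nonunital rings are modelled by the type class ring (associative, not
necessarily commutative, no unit). Modules are abelian groups with an action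
satisfying the (non-unital) module axioms.\<close>

definition ring_hom_nu :: "('k::ring \<Rightarrow> 'r::ring) \<Rightarrow> bool" where
  "ring_hom_nu f \<longleftrightarrow> (\<forall>a b. f (a + b) = f a + f b) \<and> (\<forall>a b. f (a * b) = f a * f b)"

definition right_module :: "('n::ab_group_add \<Rightarrow> 's::ring \<Rightarrow> 'n) \<Rightarrow> bool" where
  "right_module act \<longleftrightarrow>
     (\<forall>n n' s. act (n + n') s = act n s + act n' s) \<and>
     (\<forall>n s s'. act n (s + s') = act n s + act n s') \<and>
     (\<forall>n s t. act (act n s) t = act n (s * t))"

definition left_module :: "('s::ring \<Rightarrow> 'p::ab_group_add \<Rightarrow> 'p) \<Rightarrow> bool" where
  "left_module act \<longleftrightarrow>
     (\<forall>s p p'. act s (p + p') = act s p + act s p') \<and>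
     (\<forall>s s' p. act (s + s') p = act s p + act s' p) \<and>
     (\<forall>s t p. act s (act t p) = act (s * t) p)"

definition zsm :: "int \<Rightarrow> 'a::ab_group_add \<Rightarrow> 'a" where
  "zsm k a = (if 0 \<le> k then (\<Sum>i<nat k. a) else - (\<Sum>i<nat (-k). a))"

text \<open>N \<otimes>_S S is the quotient of the free abelian group on N \<times> S
(finitely supported integer-valued functions) by the subgroup tens_rel
generated by the bilinearity and balancing relations.\<close>
inductive_set tens_rel :: "('n::ab_group_add \<Rightarrow> 's::ring \<Rightarrow> 'n) \<Rightarrow> (('n \<times> 's) \<Rightarrow>\<^sub>0 int) set"
  for act where
  add_left: "Poly_Mapping.single (n + n', s) 1 - Poly_Mapping.single (n, s) 1
              - Poly_Mapping.single (n', s) 1 \<in> tens_rel act"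
| add_right: "Poly_Mapping.single (n, s + s') 1 - Poly_Mapping.single (n, s) 1
              - Poly_Mapping.single (n, s') 1 \<in> tens_rel act"
| balanced: "Poly_Mapping.single (act n t, s) 1 - Poly_Mapping.single (n, t * s) 1 \<in> tens_rel act"
| zero: "0 \<in> tens_rel act"
| plus: "x \<in> tens_rel act \<Longrightarrow> y \<in> tens_rel act \<Longrightarrow> x + y \<in> tens_rel act"
| uminus: "x \<in> tens_rel act \<Longrightarrow> - x \<in> tens_rel act"

definition tmap :: "('n::ab_group_add \<Rightarrow> 's::ring \<Rightarrow> 'n) \<Rightarrow> (('n \<times> 's) \<Rightarrow>\<^sub>0 int) \<Rightarrow> 'n" where
  "tmap act x = (\<Sum>p\<in>Poly_Mapping.keys x. zsm (Poly_Mapping.lookup x p) (act (fst p) (snd p)))"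

text \<open>t-unital: the induced map N \<otimes>_S S \<rightarrow> N is bijective, i.e. the map on the
free group is surjective and its kernel is exactly (contained in) the relation subgroup.\<close>
definition t_unital :: "('n::ab_group_add \<Rightarrow> 's::ring \<Rightarrow> 'n) \<Rightarrow> bool" where
  "t_unital act \<longleftrightarrow> (\<forall>n. \<exists>x. tmap act x = n) \<and> (\<forall>x. tmap act x = 0 \<longrightarrow> x \<in> tens_rel act)"

definition left_hom_from_ring :: "('s::ring \<Rightarrow> 'p::ab_group_add \<Rightarrow> 'p) \<Rightarrow> ('s \<Rightarrow> 'p) \<Rightarrow> bool" where
  "left_hom_from_ring act h \<longleftrightarrow> (\<forall>s t. h (s + t) = h s + h t) \<and> (\<forall>s t. h (s * t) = act s (h t))"

definition c_unital :: "('s::ring \<Rightarrow> 'p::ab_group_add \<Rightarrow> 'p) \<Rightarrow> bool" where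
  "c_unital act \<longleftrightarrow> bij_betw (\<lambda>p s. act s p) UNIV {h. left_hom_from_ring act h}"

end

(*
  Since f is right t-unital, every r \<in> R is a sum \<Sum> r\<^sub>i f(k\<^sub>i), and the formal sum
  \<Sum> r\<^sub>i \<otimes> k\<^sub>i is unique modulo the relations of R \<otimes>\<^sub>K K.

  (a) Base change m \<otimes> k \<mapsto> m \<otimes> f(k) commutes with the multiplication maps to M and is
  onto modulo relations, as m \<otimes> r = \<Sum> m r\<^sub>i \<otimes> f(k\<^sub>i); so t-unitality over K implies it
  over R. Conversely m \<otimes> r \<mapsto> \<Sum> m r\<^sub>i \<otimes> k\<^sub>i respects the relations of M \<otimes>\<^sub>R R, and if
  M \<otimes>\<^sub>R R \<rightarrow> M is bijective, every element of the kernel of M \<otimes>\<^sub>K K \<rightarrow> M lifts to the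
  kernel over R and is recovered from its lift by this map.

  (b) Over a ring S, P is c-unital iff only 0 is annihilated by S and every S-linear
  map S \<rightarrow> P is s \<mapsto> s p. As R = R f(K), R and f(K) have the same annihilator, and a
  K-linear h : K \<rightarrow> P extends to the R-linear map r \<mapsto> \<Sum> r\<^sub>i h(k\<^sub>i), well defined for the
  same reason.
*)

theory Submission
  imports Defs
begin

section \<open>Integer multiples and formal sums\<close>

lemma zsm_of_nat: "zsm (int n) a = (\<Sum>i<n. a)"
  by (simp add: zsm_def)

lemma zsm_of_neg: "zsm (- int n) a = - (\<Sum>i<n. a)"
  by (cases "n = 0") (simp_all add: zsm_def)

lemma zsm_succ: "zsm (k + 1) a = zsm k a + a"
proof (cases "k \<ge> 0")
  case True
  then obtain n where "k = int n" by (metis nonneg_eq_int)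
  then show ?thesis using zsm_of_nat[of "Suc n" a] zsm_of_nat[of n a] by (simp add: add.commute)
next
  case False
  define n where "n = nat (- k) - 1"
  have n: "k = - int (Suc n)" using False unfolding n_def by simp
  have "zsm k a = - ((\<Sum>i<n. a) + a)"
    using zsm_of_neg[of "Suc n" a] unfolding n by (simp only: sum.lessThan_Suc)
  moreover have "zsm (k + 1) a = - (\<Sum>i<n. a)"
    using zsm_of_neg[of n a] unfolding n by simp
  ultimately show ?thesis by simp
qed

lemma zsm_1 [simp]: "zsm 1 a = a"
  using zsm_succ[of 0 a] by (simp add: zsm_def)

lemma zsm_add: "zsm (c + d) a = zsm c a + zsm d a"
proof (induction d rule: int_induct[where k = 0])
  case base
  then show ?case by (simp add: zsm_def)
next
  case (step1 i)
  then show ?case using zsm_succ[of "c + i" a] zsm_succ[of i a] by (simp add: add.assoc)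
next
  case (step2 i)
  have "zsm (c + (i - 1)) a + a = zsm c a + (zsm (i - 1) a + a)"
    using zsm_succ[of "c + (i - 1)" a] zsm_succ[of "i - 1" a] step2.IH by (simp add: add.assoc)
  then show ?case by simp
qed

lemma frag_induct [case_names zero one diff]:
  assumes "P 0" "\<And>p. P (frag_of p)" "\<And>a b. P a \<Longrightarrow> P b \<Longrightarrow> P (a - b)"
  shows "P x"
  using subset_UNIV by (induction x rule: frag_induction) (use assms in auto)

text \<open>Unlike \<^const>\<open>frag_extend\<close>, the target may be any abelian group.\<close>
definition frag_eval :: "('a \<Rightarrow> 'b::ab_group_add) \<Rightarrow> ('a \<Rightarrow>\<^sub>0 int) \<Rightarrow> 'b" where
  "frag_eval g x = (\<Sum>p\<in>Poly_Mapping.keys x. zsm (Poly_Mapping.lookup x p) (g p))"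

lemma frag_eval_0 [simp]: "frag_eval g 0 = 0"
  by (simp add: frag_eval_def)

lemma frag_eval_of [simp]: "frag_eval g (frag_of p) = g p"
  by (simp add: frag_eval_def)

lemma frag_eval_add: "frag_eval g (x + y) = frag_eval g x + frag_eval g y"
proof -
  let ?S = "Poly_Mapping.keys x \<union> Poly_Mapping.keys y"
  have sum_S: "frag_eval g z = (\<Sum>p\<in>?S. zsm (Poly_Mapping.lookup z p) (g p))"
    if "Poly_Mapping.keys z \<subseteq> ?S" for z
    unfolding frag_eval_def
    by (rule sum.mono_neutral_left) (use that in \<open>auto simp: in_keys_iff zsm_def\<close>)
  show ?thesis
    using keys_add[of x y]
    by (simp add: sum_S lookup_add zsm_add sum.distrib)
qed

lemma frag_eval_diff: "frag_eval g (x - y) = frag_eval g x - frag_eval g y"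
  using frag_eval_add[of g "x - y" y] by (simp add: eq_diff_eq)

lemma frag_eval_minus: "frag_eval g (- x) = - frag_eval g x"
  using frag_eval_diff[of g 0 x] by simp

lemma frag_eval_zero_fun [simp]: "frag_eval (\<lambda>p. 0) x = 0"
  by (induction x rule: frag_induct) (simp_all add: frag_eval_diff)

lemma frag_eval_hom:
  assumes "\<And>a b. h (a + b) = h a + h b"
  shows "h (frag_eval g x) = frag_eval (\<lambda>p. h (g p)) x"
proof -
  have "h (a - b) = h a - h b" for a b
    using assms[of "a - b" b] by (simp add: eq_diff_eq)
  moreover have "h 0 = 0"
    using assms[of 0 0] by simp
  ultimately show ?thesis
    by (induction x rule: frag_induct) (simp_all add: frag_eval_diff)
qed

lemma frag_eval_frag_extend: "frag_eval g (frag_extend h x) = frag_eval (\<lambda>p. frag_eval g (h p)) x"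
  by (induction x rule: frag_induct) (simp_all add: frag_eval_diff frag_extend_diff)

lemma frag_extend_frag_extend: "frag_extend g (frag_extend h x) = frag_extend (\<lambda>p. frag_extend g (h p)) x"
  by (induction x rule: frag_induct) (simp_all add: frag_extend_diff)

lemma frag_extend_fun_add: "frag_extend (\<lambda>p. g p + h p) x = frag_extend g x + frag_extend h x"
  by (induction x rule: frag_induct) (simp_all add: frag_extend_diff algebra_simps)

lemma tmap_eq_frag_eval: "tmap act = frag_eval (case_prod act)"
  by (simp add: fun_eq_iff tmap_def frag_eval_def case_prod_beta)

lemma tmap_of [simp]: "tmap act (frag_of (n, s)) = act n s"
  by (simp add: tmap_eq_frag_eval)

lemma tmap_add: "tmap act (x + y) = tmap act x + tmap act y"
  by (simp add: tmap_eq_frag_eval frag_eval_add)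

lemma tmap_diff: "tmap act (x - y) = tmap act x - tmap act y"
  by (simp add: tmap_eq_frag_eval frag_eval_diff)

section \<open>Congruence modulo the tensor relations\<close>

definition tens_cong :: "('n::ab_group_add \<Rightarrow> 's::ring \<Rightarrow> 'n) \<Rightarrow> ('n \<times> 's \<Rightarrow>\<^sub>0 int) \<Rightarrow> ('n \<times> 's \<Rightarrow>\<^sub>0 int) \<Rightarrow> bool" where
  "tens_cong act x y \<longleftrightarrow> x - y \<in> tens_rel act"

lemma tens_rel_diff: "x \<in> tens_rel act \<Longrightarrow> y \<in> tens_rel act \<Longrightarrow> x - y \<in> tens_rel act"
  unfolding diff_conv_add_uminus by (intro tens_rel.plus tens_rel.uminus)

lemma tens_cong_refl [simp]: "tens_cong act x x"
  by (simp add: tens_cong_def tens_rel.zero)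

lemma tens_cong_sym: "tens_cong act x y \<Longrightarrow> tens_cong act y x"
  unfolding tens_cong_def by (metis minus_diff_eq tens_rel.uminus)

lemma tens_cong_trans [trans]: "tens_cong act x y \<Longrightarrow> tens_cong act y z \<Longrightarrow> tens_cong act x z"
  unfolding tens_cong_def using tens_rel.plus[of "x - y" act "y - z"] by simp

lemma tens_cong_diff:
  "tens_cong act x y \<Longrightarrow> tens_cong act x' y' \<Longrightarrow> tens_cong act (x - x') (y - y')"
  unfolding tens_cong_def using tens_rel_diff[of "x - y" act "x' - y'"] by (simp add: algebra_simps)

lemma tens_cong_0_iff: "tens_cong act x 0 \<longleftrightarrow> x \<in> tens_rel act"
  by (simp add: tens_cong_def)

lemma tens_cong_add_left: "tens_cong act (frag_of (n + n', s)) (frag_of (n, s) + frag_of (n', s))"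
  unfolding tens_cong_def using tens_rel.add_left by (simp add: diff_diff_eq)

lemma tens_cong_add_right: "tens_cong act (frag_of (n, s + s')) (frag_of (n, s) + frag_of (n, s'))"
  unfolding tens_cong_def using tens_rel.add_right by (simp add: diff_diff_eq)

lemma tens_cong_balanced: "tens_cong act (frag_of (act n t, s)) (frag_of (n, t * s))"
  unfolding tens_cong_def using tens_rel.balanced .

lemma frag_extend_tens_cong:
  assumes "\<And>p. tens_cong act (g p) (h p)"
  shows "tens_cong act (frag_extend g x) (frag_extend h x)"
  by (induction x rule: frag_induct) (simp_all add: assms frag_extend_diff tens_cong_diff)

lemma tens_cong_frag_extend:
  assumes "tens_cong act x y"
    and "\<And>n n' s. tens_cong act' (h (n + n', s)) (h (n, s) + h (n', s))"
    and "\<And>n s s'. tens_cong act' (h (n, s + s')) (h (n, s) + h (n, s'))"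
    and "\<And>n t s. tens_cong act' (h (act n t, s)) (h (n, t * s))"
  shows "tens_cong act' (frag_extend h x) (frag_extend h y)"
proof -
  have "frag_extend h z \<in> tens_rel act'" if "z \<in> tens_rel act" for z
    using that assms(2-4) unfolding tens_cong_def
    by (induction z rule: tens_rel.induct)
       (simp_all add: frag_extend_add frag_extend_diff frag_extend_minus diff_diff_eq
         tens_rel.zero tens_rel.plus tens_rel.uminus)
  then show ?thesis
    using assms(1) unfolding tens_cong_def by (metis frag_extend_diff)
qed

lemma frag_eval_tens_cong:
  assumes "tens_cong act x y"
    and "\<And>n n' s. g (n + n', s) = g (n, s) + g (n', s)"
    and "\<And>n s s'. g (n, s + s') = g (n, s) + g (n, s')"
    and "\<And>n t s. g (act n t, s) = g (n, t * s)"
  shows "frag_eval g x = frag_eval g y"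
proof -
  have "frag_eval g z = 0" if "z \<in> tens_rel act" for z
    using that
    by (induction z rule: tens_rel.induct)
       (simp_all add: frag_eval_add frag_eval_diff frag_eval_minus assms(2-4))
  then show ?thesis
    using assms(1) unfolding tens_cong_def by (metis frag_eval_diff eq_iff_diff_eq_0)
qed

lemma tmap_tens_cong: "right_module act \<Longrightarrow> tens_cong act x y \<Longrightarrow> tmap act x = tmap act y"
  unfolding tmap_eq_frag_eval right_module_def by (erule frag_eval_tens_cong) auto

lemma tens_cong_frag_eval:
  assumes "\<And>a b. tens_cong act (F (a + b)) (F a + F b)"
  shows "tens_cong act (F (frag_eval g x)) (frag_extend (\<lambda>p. F (g p)) x)"
proof -
  have F0: "tens_cong act (F 0) 0"
    using tens_rel.uminus[OF assms[of 0 0, unfolded tens_cong_def]] unfolding tens_cong_def by simp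
  have F_diff: "tens_cong act (F (a - b)) (F a - F b)" for a b
    using tens_rel.uminus[OF assms[of "a - b" b, unfolded tens_cong_def]]
    unfolding tens_cong_def by (simp add: algebra_simps)
  show ?thesis
  proof (induction x rule: frag_induct)
    case (diff a b)
    have "tens_cong act (F (frag_eval g (a - b))) (F (frag_eval g a) - F (frag_eval g b))"
      by (simp add: frag_eval_diff F_diff)
    also have "tens_cong act \<dots> (frag_extend (\<lambda>p. F (g p)) (a - b))"
      unfolding frag_extend_diff by (rule tens_cong_diff[OF diff.IH])
    finally show ?case .
  qed (simp_all add: F0)
qed

definition tmap_inv :: "('n::ab_group_add \<Rightarrow> 's::ring \<Rightarrow> 'n) \<Rightarrow> 'n \<Rightarrow> ('n \<times> 's \<Rightarrow>\<^sub>0 int)" where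
  "tmap_inv act n = (SOME x. tmap act x = n)"

lemma tmap_tmap_inv: "t_unital act \<Longrightarrow> tmap act (tmap_inv act n) = n"
  unfolding t_unital_def tmap_inv_def by (metis (mono_tags) someI_ex)

lemma t_unital_tens_cong: "t_unital act \<Longrightarrow> tmap act x = tmap act y \<Longrightarrow> tens_cong act x y"
  unfolding t_unital_def tens_cong_def by (simp add: tmap_diff)

section \<open>c-unital left modules\<close>

lemma left_module_act_0: "left_module act \<Longrightarrow> act s 0 = 0"
  unfolding left_module_def by (metis add_cancel_right_right)

lemma left_module_act_diff: "left_module act \<Longrightarrow> act s (p - p') = act s p - act s p'"
  unfolding left_module_def by (metis add_diff_cancel diff_add_cancel)

lemma left_hom_from_ring_act: "left_module act \<Longrightarrow> left_hom_from_ring act (\<lambda>s. act s p)"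
  by (simp add: left_module_def left_hom_from_ring_def)

lemma c_unital_iff:
  assumes lm: "left_module act"
  shows "c_unital act \<longleftrightarrow> (\<forall>q. (\<forall>s. act s q = 0) \<longrightarrow> q = 0)
                          \<and> (\<forall>h. left_hom_from_ring act h \<longrightarrow> (\<exists>p. h = (\<lambda>s. act s p)))"
proof -
  have "inj (\<lambda>p s. act s p) \<longleftrightarrow> (\<forall>q. (\<forall>s. act s q = 0) \<longrightarrow> q = 0)"
  proof
    assume inj: "inj (\<lambda>p s. act s p)"
    show "\<forall>q. (\<forall>s. act s q = 0) \<longrightarrow> q = 0"
    proof (intro allI impI)
      fix q
      assume "\<forall>s. act s q = 0"
      then have "(\<lambda>s. act s q) = (\<lambda>s. act s 0)"
        by (simp add: left_module_act_0[OF lm])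
      with inj show "q = 0" by (rule injD)
    qed
  next
    assume ann: "\<forall>q. (\<forall>s. act s q = 0) \<longrightarrow> q = 0"
    show "inj (\<lambda>p s. act s p)"
    proof (rule injI)
      fix p p'
      assume "(\<lambda>s. act s p) = (\<lambda>s. act s p')"
      then have "\<forall>s. act s (p - p') = 0"
        by (simp add: left_module_act_diff[OF lm] fun_eq_iff)
      with ann have "p - p' = 0" by blast
      then show "p = p'" by simp
    qed
  qed
  moreover have "range (\<lambda>p s. act s p) = {h. left_hom_from_ring act h}
      \<longleftrightarrow> (\<forall>h. left_hom_from_ring act h \<longrightarrow> (\<exists>p. h = (\<lambda>s. act s p)))"
    using left_hom_from_ring_act[OF lm] by blast
  ultimately show ?thesis
    unfolding c_unital_def bij_betw_def by simp
qed

section \<open>Restriction of scalars along a right t-unital homomorphism\<close>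

locale right_t_unital_hom =
  fixes f :: "'k::ring \<Rightarrow> 'r::ring"
  assumes ring_hom: "ring_hom_nu f"
    and t_unital_restrict_mult: "t_unital (\<lambda>r k. r * f k)"
begin

abbreviation restrict_right_act :: "('m \<Rightarrow> 'r \<Rightarrow> 'm) \<Rightarrow> 'm \<Rightarrow> 'k \<Rightarrow> 'm" where
  "restrict_right_act act \<equiv> \<lambda>m k. act m (f k)"

abbreviation restrict_left_act :: "('r \<Rightarrow> 'p \<Rightarrow> 'p) \<Rightarrow> 'k \<Rightarrow> 'p \<Rightarrow> 'p" where
  "restrict_left_act act \<equiv> \<lambda>k p. act (f k) p"

lemma f_add: "f (a + b) = f a + f b"
  and f_mult: "f (a * b) = f a * f b"
  using ring_hom by (simp_all add: ring_hom_nu_def)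

lemma tmap_restrict_mult_inv: "tmap (restrict_right_act (*)) (tmap_inv (restrict_right_act (*)) r) = r"
  using t_unital_restrict_mult by (rule tmap_tmap_inv)

lemma additive_expand:
  assumes "\<And>a b. h (a + b) = h a + h b"
  shows "h r = frag_eval (\<lambda>(s, k). h (s * f k)) (tmap_inv (restrict_right_act (*)) r)"
proof -
  have "h r = h (frag_eval (\<lambda>(s, k). s * f k) (tmap_inv (restrict_right_act (*)) r))"
    using tmap_restrict_mult_inv[of r] by (simp add: tmap_eq_frag_eval)
  also have "\<dots> = frag_eval (\<lambda>(s, k). h (s * f k)) (tmap_inv (restrict_right_act (*)) r)"
    using frag_eval_hom[where h = h and g = "\<lambda>(s, k). s * f k", OF assms] by (simp add: split_def)
  finally show ?thesis .
qed

lemma tmap_restrict_mult_left: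
  "tmap (restrict_right_act (*)) (frag_extend (\<lambda>(r, k). frag_of (t * r, k)) z)
    = t * tmap (restrict_right_act (*)) z"
  using frag_eval_hom[of "(*) t" "\<lambda>(r, k). r * f k" z]
  by (simp add: tmap_eq_frag_eval frag_eval_frag_extend distrib_left split_def mult.assoc)

definition base_change :: "('m \<times> 'k \<Rightarrow>\<^sub>0 int) \<Rightarrow> ('m \<times> 'r \<Rightarrow>\<^sub>0 int)" where
  "base_change = frag_extend (\<lambda>(m, k). frag_of (m, f k))"

lemma tmap_base_change: "tmap act (base_change x) = tmap (restrict_right_act act) x"
  by (simp add: base_change_def tmap_eq_frag_eval frag_eval_frag_extend split_def)

lemma base_change_tens_cong:
  "tens_cong (restrict_right_act act) x y \<Longrightarrow> tens_cong act (base_change x) (base_change y)"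
  unfolding base_change_def
  by (erule tens_cong_frag_extend)
     (simp_all add: f_add f_mult tens_cong_add_left tens_cong_add_right tens_cong_balanced)

lemma ex_base_change_tens_cong: "\<exists>x. tens_cong act y (base_change x)"
proof (induction y rule: frag_induct)
  case zero
  show ?case by (rule exI[of _ 0]) (simp add: base_change_def)
next
  case (one p)
  obtain n r where p: "p = (n, r)" by fastforce
  let ?z = "tmap_inv (restrict_right_act (*)) r"
  have "tens_cong act (frag_of (n, frag_eval (\<lambda>(s, k). s * f k) ?z))
                      (frag_extend (\<lambda>(s, k). frag_of (n, s * f k)) ?z)"
    using tens_cong_frag_eval[where F = "\<lambda>s. frag_of (n, s)", OF tens_cong_add_right]
    by (simp add: split_def)
  also have "tens_cong act \<dots> (frag_extend (\<lambda>(s, k). frag_of (act n s, f k)) ?z)"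
    by (rule frag_extend_tens_cong) (auto intro: tens_cong_sym tens_cong_balanced)
  also have "\<dots> = base_change (frag_extend (\<lambda>(s, k). frag_of (act n s, k)) ?z)"
    by (simp add: base_change_def frag_extend_frag_extend split_def)
  finally show ?case
    using tmap_restrict_mult_inv[of r] by (auto simp: p tmap_eq_frag_eval)
next
  case (diff a b)
  then obtain x y where "tens_cong act a (base_change x)" "tens_cong act b (base_change y)"
    by blast
  then have "tens_cong act (a - b) (base_change (x - y))"
    unfolding base_change_def frag_extend_diff by (rule tens_cong_diff)
  then show ?case by blast
qed

lemma t_unital_if_restrict_t_unital:
  assumes rm: "right_module act" and tu: "t_unital (restrict_right_act act)"
  shows "t_unital act"
  unfolding t_unital_def
proof (intro conjI allI impI)
  fix n
  show "\<exists>y. tmap act y = n"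
    using tu tmap_base_change unfolding t_unital_def by metis
next
  fix y
  assume y: "tmap act y = 0"
  obtain x where yx: "tens_cong act y (base_change x)"
    using ex_base_change_tens_cong by blast
  have "tmap (restrict_right_act act) x = 0"
    using tmap_tens_cong[OF rm yx] y by (simp add: tmap_base_change)
  then have "tens_cong (restrict_right_act act) x 0"
    using tu by (simp add: t_unital_def tens_cong_0_iff)
  then have "tens_cong act (base_change x) 0"
    using base_change_tens_cong by (fastforce simp: base_change_def)
  with yx show "y \<in> tens_rel act"
    using tens_cong_trans tens_cong_0_iff by blast
qed

definition left_scale :: "('m \<Rightarrow> 'r \<Rightarrow> 'm) \<Rightarrow> 'm \<Rightarrow> ('r \<times> 'k \<Rightarrow>\<^sub>0 int) \<Rightarrow> ('m \<times> 'k \<Rightarrow>\<^sub>0 int)" where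
  "left_scale act m = frag_extend (\<lambda>(s, k). frag_of (act m s, k))"

definition base_change_inv :: "('m \<Rightarrow> 'r \<Rightarrow> 'm) \<Rightarrow> ('m \<times> 'r \<Rightarrow>\<^sub>0 int) \<Rightarrow> ('m \<times> 'k \<Rightarrow>\<^sub>0 int)" where
  "base_change_inv act = frag_extend (\<lambda>(m, r). left_scale act m (tmap_inv (restrict_right_act (*)) r))"

lemma left_scale_tens_cong:
  assumes "right_module act" and "tens_cong (restrict_right_act (*)) z z'"
  shows "tens_cong (restrict_right_act act) (left_scale act m z) (left_scale act m z')"
proof -
  have act_add: "act m (n + n') = act m n + act m n'"
    and act_mult: "act m (n * f t) = act (act m n) (f t)" for n n' t
    using assms(1) by (simp_all add: right_module_def)
  from assms(2) show ?thesis
    unfolding left_scale_def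
    by (rule tens_cong_frag_extend)
       (simp_all add: act_add act_mult tens_cong_add_left tens_cong_add_right
         tens_cong_balanced[of "restrict_right_act act"])
qed

lemma base_change_inv_of_mult:
  assumes "right_module act"
  shows "tens_cong (restrict_right_act act) (base_change_inv act (frag_of (m, r * f k))) (frag_of (act m r, k))"
proof -
  have "tens_cong (restrict_right_act (*)) (tmap_inv (restrict_right_act (*)) (r * f k)) (frag_of (r, k))"
    using t_unital_restrict_mult by (rule t_unital_tens_cong) (simp add: tmap_restrict_mult_inv)
  from left_scale_tens_cong[OF assms this, of m] show ?thesis
    by (simp add: base_change_inv_def left_scale_def)
qed

lemma base_change_inv_tens_cong:
  assumes rm: "right_module act" and "tens_cong act y y'"
  shows "tens_cong (restrict_right_act act) (base_change_inv act y) (base_change_inv act y')"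
proof -
  let ?inv = "tmap_inv (restrict_right_act (*))"
  have ra: "act (n + n') s = act n s + act n' s" and rc: "act (act n t) s = act n (t * s)" for n n' s t
    using rm by (simp_all add: right_module_def)
  have inv_cong: "tens_cong (restrict_right_act (*)) z (?inv r)" if "tmap (restrict_right_act (*)) z = r" for z r
    using t_unital_restrict_mult by (rule t_unital_tens_cong) (simp add: that tmap_restrict_mult_inv)
  have add_left: "tens_cong (restrict_right_act act) (left_scale act (n + n') z) (left_scale act n z + left_scale act n' z)" for n n' z
  proof -
    have "tens_cong (restrict_right_act act) (left_scale act (n + n') z)
            (frag_extend (\<lambda>p. frag_of (act n (fst p), snd p) + frag_of (act n' (fst p), snd p)) z)"
      unfolding left_scale_def by (rule frag_extend_tens_cong) (simp add: split_def ra tens_cong_add_left)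
    then show ?thesis
      by (simp add: left_scale_def frag_extend_fun_add split_def)
  qed
  have add_right: "tens_cong (restrict_right_act act) (left_scale act n (?inv (s + s'))) (left_scale act n (?inv s) + left_scale act n (?inv s'))" for n s s'
  proof -
    have "tens_cong (restrict_right_act act) (left_scale act n (?inv (s + s'))) (left_scale act n (?inv s + ?inv s'))"
      using rm tens_cong_sym[OF inv_cong[of "?inv s + ?inv s'" "s + s'"]]
      by (rule left_scale_tens_cong) (simp add: tmap_add tmap_restrict_mult_inv)
    then show ?thesis
      by (simp add: left_scale_def frag_extend_add)
  qed
  have balanced: "tens_cong (restrict_right_act act) (left_scale act (act n t) (?inv s)) (left_scale act n (?inv (t * s)))" for n t s
  proof -
    have "left_scale act (act n t) (?inv s) = left_scale act n (frag_extend (\<lambda>(r, k). frag_of (t * r, k)) (?inv s))"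
      by (simp add: left_scale_def frag_extend_frag_extend rc split_def)
    also have "tens_cong (restrict_right_act act) \<dots> (left_scale act n (?inv (t * s)))"
      using rm inv_cong by (rule left_scale_tens_cong) (simp add: tmap_restrict_mult_left tmap_restrict_mult_inv)
    finally show ?thesis .
  qed
  show ?thesis
    using assms(2) unfolding base_change_inv_def
    by (rule tens_cong_frag_extend) (simp_all add: add_left add_right balanced)
qed
lemma base_change_inv_frag_extend:
  "base_change_inv act (frag_extend g x) = frag_extend (\<lambda>p. base_change_inv act (g p)) x"
  by (simp add: base_change_inv_def frag_extend_frag_extend)

definition base_change_lift :: "('m::ab_group_add \<Rightarrow> 'r \<Rightarrow> 'm) \<Rightarrow> ('m \<times> 'k \<Rightarrow>\<^sub>0 int) \<Rightarrow> ('m \<times> 'r \<Rightarrow>\<^sub>0 int)" where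
  "base_change_lift act =
     frag_extend (\<lambda>(m, k). frag_extend (\<lambda>(n, r). frag_of (n, r * f k)) (tmap_inv act m))"

lemma tmap_base_change_lift:
  assumes rm: "right_module act" and tu: "t_unital act"
  shows "tmap act (base_change_lift act x) = tmap (restrict_right_act act) x"
proof -
  have ra: "act (n + n') s = act n s + act n' s" and rc: "act (act n t) s = act n (t * s)" for n n' s t
    using rm by (simp_all add: right_module_def)
  have "frag_eval (\<lambda>(n, r). act n (r * f k)) (tmap_inv act m) = act m (f k)" for m k
  proof -
    have "act m (f k) = act (frag_eval (case_prod act) (tmap_inv act m)) (f k)"
      using tmap_tmap_inv[OF tu] by (simp add: tmap_eq_frag_eval)
    also have "\<dots> = frag_eval (\<lambda>p. act (case_prod act p) (f k)) (tmap_inv act m)"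
      by (rule frag_eval_hom) (simp add: ra)
    finally show ?thesis
      by (simp add: rc split_def)
  qed
  then show ?thesis
    by (simp add: base_change_lift_def tmap_eq_frag_eval frag_eval_frag_extend split_def)
qed

lemma base_change_inv_lift:
  assumes rm: "right_module act" and tu: "t_unital act"
  shows "tens_cong (restrict_right_act act) (base_change_inv act (base_change_lift act x)) x"
proof -
  let ?inv = "tmap_inv act"
  have "base_change_inv act (base_change_lift act x) = frag_extend (\<lambda>(m, k).
          frag_extend (\<lambda>(n, r). base_change_inv act (frag_of (n, r * f k))) (?inv m)) x"
    by (simp add: base_change_lift_def base_change_inv_frag_extend split_def)
  also have "tens_cong (restrict_right_act act) \<dots>
               (frag_extend (\<lambda>(m, k). frag_extend (\<lambda>(n, r). frag_of (act n r, k)) (?inv m)) x)"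
  proof -
    have "tens_cong (restrict_right_act act)
            (frag_extend (\<lambda>(n, r). base_change_inv act (frag_of (n, r * f k))) z)
            (frag_extend (\<lambda>(n, r). frag_of (act n r, k)) z)" for k z
      by (rule frag_extend_tens_cong) (simp add: case_prod_beta base_change_inv_of_mult[OF rm])
    then show ?thesis
      by (intro frag_extend_tens_cong) (simp add: case_prod_beta)
  qed
  also have "tens_cong (restrict_right_act act) \<dots> (frag_extend frag_of x)"
  proof (rule frag_extend_tens_cong)
    fix p :: "_ \<times> 'k"
    have inv: "frag_eval (case_prod act) (?inv m) = m" for m
      using tmap_tmap_inv[OF tu] by (simp add: tmap_eq_frag_eval)
    show "tens_cong (restrict_right_act act)
            ((\<lambda>(m, k). frag_extend (\<lambda>(n, r). frag_of (act n r, k)) (?inv m)) p) (frag_of p)"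
      using tens_cong_sym[OF tens_cong_frag_eval[where F = "\<lambda>a. frag_of (a, snd p)"
              and g = "case_prod act" and x = "?inv (fst p)" and act = "restrict_right_act act",
              OF tens_cong_add_left]]
      by (simp add: inv case_prod_beta) (simp add: split_def)
  qed
  also have "\<dots> = x"
    by (rule frag_expansion[symmetric])
  finally show ?thesis .
qed

lemma restrict_t_unital_if_t_unital:
  assumes rm: "right_module act" and tu: "t_unital act"
  shows "t_unital (restrict_right_act act)"
  unfolding t_unital_def
proof (intro conjI allI impI)
  fix n
  obtain x where "tens_cong act (tmap_inv act n) (base_change x)"
    using ex_base_change_tens_cong by blast
  then have "tmap (restrict_right_act act) x = n"
    using tmap_tens_cong[OF rm] tmap_base_change tmap_tmap_inv[OF tu] by metis
  then show "\<exists>x. tmap (restrict_right_act act) x = n" by blast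
next
  fix x
  assume x: "tmap (restrict_right_act act) x = 0"
  let ?y = "base_change_lift act x"
  have "tmap act ?y = 0"
    using tmap_base_change_lift[OF rm tu] x by simp
  then have "tens_cong act ?y 0"
    using tu by (simp add: t_unital_def tens_cong_0_iff)
  then have "tens_cong (restrict_right_act act) (base_change_inv act ?y) 0"
    using base_change_inv_tens_cong[OF rm] by (fastforce simp: base_change_inv_def)
  with base_change_inv_lift[OF rm tu] show "x \<in> tens_rel (restrict_right_act act)"
    using tens_cong_sym tens_cong_trans tens_cong_0_iff by blast
qed

lemma t_unital_restrict_iff:
  "right_module act \<Longrightarrow> t_unital act \<longleftrightarrow> t_unital (restrict_right_act act)"
  using t_unital_if_restrict_t_unital restrict_t_unital_if_t_unital by blast

lemma act_eq_0_if_restrict_act_eq_0: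
  assumes lm: "left_module act" and "\<And>k. act (f k) q = 0"
  shows "act r q = 0"
proof -
  have "act (s * f k) q = act s (act (f k) q)" for s k
    using lm by (simp add: left_module_def)
  then have "act (s * f k) q = 0" for s k
    by (simp add: assms(2) left_module_act_0[OF lm])
  then have "(\<lambda>(s, k). act (s * f k) q) = (\<lambda>_. 0)"
    by auto
  moreover have "act r q = frag_eval (\<lambda>(s, k). act (s * f k) q) (tmap_inv (restrict_right_act (*)) r)"
    using lm by (intro additive_expand) (simp add: left_module_def)
  ultimately show ?thesis by simp
qed

lemma left_hom_from_ring_eq_act:
  assumes lm: "left_module act" and g: "left_hom_from_ring act g"
    and on_f: "\<And>k. g (f k) = act (f k) p"
  shows "g r = act r p"
proof -
  have g_add: "g (s + t) = g s + g t" and g_mult: "g (s * t) = act s (g t)" for s t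
    using g by (simp_all add: left_hom_from_ring_def)
  have act_add: "act (s + t) p = act s p + act t p" and act_mult: "act s (act t p) = act (s * t) p" for s t
    using lm by (simp_all add: left_module_def)
  have "g r = frag_eval (\<lambda>(s, k). g (s * f k)) (tmap_inv (restrict_right_act (*)) r)"
    by (rule additive_expand) (rule g_add)
  also have "\<dots> = frag_eval (\<lambda>(s, k). act (s * f k) p) (tmap_inv (restrict_right_act (*)) r)"
    by (simp add: g_mult on_f act_mult)
  also have "\<dots> = act r p"
    by (rule additive_expand[symmetric]) (rule act_add)
  finally show ?thesis .
qed

lemma ex_left_hom_extension:
  assumes lm: "left_module act" and h: "left_hom_from_ring (restrict_left_act act) h"
  shows "\<exists>g. left_hom_from_ring act g \<and> (\<forall>r k. g (r * f k) = act r (h k))"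
proof -
  have h_add: "h (s + t) = h s + h t" and h_mult: "h (s * t) = act (f s) (h t)" for s t
    using h by (simp_all add: left_hom_from_ring_def)
  have la: "act s (p + p') = act s p + act s p'" and lb: "act (s + s') p = act s p + act s' p"
    and lc: "act s (act t p) = act (s * t) p" for s s' t p p'
    using lm by (simp_all add: left_module_def)
  define G where "G = frag_eval (\<lambda>(r, k). act r (h k))"
  have G_cong: "G z = G z'" if "tens_cong (restrict_right_act (*)) z z'" for z z'
    unfolding G_def using that by (rule frag_eval_tens_cong) (simp_all add: la lb lc h_add h_mult)
  define g where "g r = G (tmap_inv (restrict_right_act (*)) r)" for r
  have g_G: "g r = G z" if "tmap (restrict_right_act (*)) z = r" for z r
    unfolding g_def using t_unital_restrict_mult
    by (intro G_cong t_unital_tens_cong) (simp_all add: that tmap_restrict_mult_inv)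
  have "left_hom_from_ring act g"
    unfolding left_hom_from_ring_def
  proof (intro conjI allI)
    fix s t
    let ?inv = "tmap_inv (restrict_right_act (*))"
    have "g (s + t) = G (?inv s + ?inv t)"
      by (rule g_G) (simp add: tmap_add tmap_restrict_mult_inv)
    then show "g (s + t) = g s + g t"
      by (simp add: G_def g_def frag_eval_add)
    have "g (s * t) = G (frag_extend (\<lambda>(r, k). frag_of (s * r, k)) (?inv t))"
      by (rule g_G) (simp add: tmap_restrict_mult_left tmap_restrict_mult_inv)
    also have "\<dots> = act s (g t)"
      unfolding G_def g_def frag_eval_frag_extend
      by (subst frag_eval_hom[where h = "act s"]) (simp_all add: la lc split_def)
    finally show "g (s * t) = act s (g t)" .
  qed
  moreover have "g (r * f k) = act r (h k)" for r k
    using g_G[of "frag_of (r, k)"] by (simp add: G_def)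
  ultimately show ?thesis by blast
qed

lemma c_unital_restrict_iff:
  assumes lm: "left_module act"
  shows "c_unital act \<longleftrightarrow> c_unital (restrict_left_act act)"
proof -
  have lm_restrict: "left_module (restrict_left_act act)"
    using lm by (simp add: left_module_def f_add f_mult)
  have ann_iff: "(\<forall>s. act s q = 0) \<longleftrightarrow> (\<forall>k. act (f k) q = 0)" for q
    using act_eq_0_if_restrict_act_eq_0[OF lm] by blast
  show ?thesis
    unfolding c_unital_iff[OF lm] c_unital_iff[OF lm_restrict] ann_iff
  proof (intro iffI conjI; (elim conjE)?)
    assume inj: "\<forall>q. (\<forall>k. act (f k) q = 0) \<longrightarrow> q = 0"
      and surj: "\<forall>g. left_hom_from_ring act g \<longrightarrow> (\<exists>p. g = (\<lambda>s. act s p))"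
    show "\<forall>h. left_hom_from_ring (restrict_left_act act) h \<longrightarrow> (\<exists>p. h = (\<lambda>k. act (f k) p))"
    proof (intro allI impI)
      fix h
      assume "left_hom_from_ring (restrict_left_act act) h"
      then obtain g where g: "left_hom_from_ring act g" and g_h: "\<And>r k. g (r * f k) = act r (h k)"
        using ex_left_hom_extension[OF lm] by blast
      obtain p where p: "g = (\<lambda>s. act s p)"
        using surj g by blast
      have "h k = act (f k) p" for k
      proof -
        have "act (f j) (h k - act (f k) p) = 0" for j
          using g_h[of "f j" k] lm by (simp add: p left_module_act_diff left_module_def)
        with inj have "h k - act (f k) p = 0" by blast
        then show ?thesis by simp
      qed
      then show "\<exists>p. h = (\<lambda>k. act (f k) p)" by blast
    qed
  next
    assume surj: "\<forall>h. left_hom_from_ring (restrict_left_act act) h \<longrightarrow> (\<exists>p. h = (\<lambda>k. act (f k) p))"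
    show "\<forall>g. left_hom_from_ring act g \<longrightarrow> (\<exists>p. g = (\<lambda>s. act s p))"
    proof (intro allI impI)
      fix g
      assume g: "left_hom_from_ring act g"
      then have "left_hom_from_ring (restrict_left_act act) (\<lambda>k. g (f k))"
        by (simp add: left_hom_from_ring_def f_add f_mult)
      then obtain p where "(\<lambda>k. g (f k)) = (\<lambda>k. act (f k) p)"
        using surj by blast
      then have "g r = act r p" for r
        using left_hom_from_ring_eq_act[OF lm g] by (metis)
      then show "\<exists>p. g = (\<lambda>s. act s p)" by blast
    qed
  qed
qed

end

theorem corollary9p7:
  fixes f :: "'k::ring \<Rightarrow> 'r::ring"
  assumes "ring_hom_nu f"
    and "t_unital (\<lambda>(r::'r) (k::'k). r * f k)"
  shows "(\<forall>act :: 'm::ab_group_add \<Rightarrow> 'r \<Rightarrow> 'm. right_module act \<longrightarrow>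
            (t_unital act \<longleftrightarrow> t_unital (\<lambda>m (k::'k). act m (f k))))
       \<and> (\<forall>act :: 'r \<Rightarrow> 'p::ab_group_add \<Rightarrow> 'p. left_module act \<longrightarrow>
            (c_unital act \<longleftrightarrow> c_unital (\<lambda>(k::'k) p. act (f k) p)))"
proof -
  interpret right_t_unital_hom f
    using assms by (rule right_t_unital_hom.intro)
  show ?thesis
    using t_unital_restrict_iff c_unital_restrict_iff by blast
qed

end
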